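(* Let $\{M_p\mid p\in P\}$ be a Morse decomposition of a multivector field on a finite simplicial complex $K$, let $f:K\to\mathbb R$ be Lyapunov for the Morse decomposition, and let $P_f$ and $P'_f$ be two $f$-compatible orders of $P$, with corresponding persistence modules $H(\mathbf F,P_f)$ and $H(\mathbf F',P'_f)$. Then $\mathrm{pers}(H(\mathbf F,P_f))=\mathrm{pers}(H(\mathbf F',P'_f))$.
   Context: $K$ is a finite simplicial complex; a multivector field $\mathcal V$ on $K$ is a partition of $K$ into convex sets $V$ (if $\sigma,\tau\in V$ and $\sigma\le\mu\le\tau$ in the face order then $\mu\in V$); $F_{\mathcal V}(\sigma)=[\sigma]_{\mathcal V}\cup\{\tau:\tau\le\sigma\}$ where $[\sigma]_{\mathcal V}$ is the part containing $\sigma$; a path is a sequence $\sigma_1,\dots,\sigma_r$ with $\sigma_k\in F_{\mathcal V}(\sigma_{k-1})$. A Morse decomposition indexed by a finite poset $(P,\le_P)$ is a partition $K=\bigsqcup_{p\in P}M_p$ such that every path from $M_p$ to $M_q$ has $q\le_P p$. Let $m=|P|$. $f:K\to\mathbb R$ is Lyapunov if $f$ is constant on each $M_p$, with value $f(p)$, and $p\le_P q\Rightarrow f(p)\le f(q)$. An $f$-compatible order $P_f$ is an enumeration $p_1,\dots,p_m$ of $P$ that is a linear extension of $\le_P$ with $f(p_1)\le\dots\le f(p_m)$. For such an order, $K_i=\bigsqcup_{j\le i}M_{p_j}$ is a subcomplex of $K$ and $H(\mathbf F,P_f)$ is the persistence module $H_*(C(K_1))\to\dots\to H_*(C(K_m))$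 of simplicial homology over $\mathbb Z_2$ with inclusion-induced maps; $\mathbf F'$ is the same construction for $P'_f$. For such a module indexed by $p_1,\dots,p_m$, $\mathrm{pers}$ is the persistence diagram: decompose each homological degree into interval modules $[a,b]$, $1\le a\le b\le m$, and record for each the point $(f(p_a),f(p_{b+1}))$ with $f(p_{m+1}):=+\infty$, discarding points with $f(p_a)=f(p_{b+1})$; the result is a multiset of points per degree. *)

theory Defs
  imports "HOL-Analysis.Analysis" "HOL-Library.Z2" "HOL-Library.Function_Algebras" "HOL-Library.Multiset"
begin

definition finite_simp_complex :: "'v set set \<Rightarrow> bool" where
  "finite_simp_complex K \<longleftrightarrow> finite K \<and>
     (\<forall>\<sigma>\<in>K. finite \<sigma> \<and> \<sigma> \<noteq> {} \<and> (\<forall>\<tau>. \<tau> \<noteq> {} \<and> \<tau> \<subseteq> \<sigma> \<longrightarrow> \<tau> \<in> K))"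

definition convex_in :: "'v set set \<Rightarrow> bool" where
  "convex_in A \<longleftrightarrow> (\<forall>\<sigma>\<in>A. \<forall>\<tau>\<in>A. \<forall>\<mu>. \<sigma> \<subseteq> \<mu> \<and> \<mu> \<subseteq> \<tau> \<longrightarrow> \<mu> \<in> A)"

definition multivector_field :: "'v set set \<Rightarrow> 'v set set set \<Rightarrow> bool" where
  "multivector_field K V \<longleftrightarrow>
     (\<forall>A\<in>V. A \<noteq> {} \<and> A \<subseteq> K \<and> convex_in A) \<and> \<Union>V = K \<and>
     (\<forall>A\<in>V. \<forall>B\<in>V. A \<noteq> B \<longrightarrow> A \<inter> B = {})"

definition mv_class :: "'v set set set \<Rightarrow> 'v set \<Rightarrow> 'v set set" where
  "mv_class V \<sigma> = (THE A. A \<in> V \<and> \<sigma> \<in> A)"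

definition mv_F :: "'v set set \<Rightarrow> 'v set set set \<Rightarrow> 'v set \<Rightarrow> 'v set set" where
  "mv_F K V \<sigma> = mv_class V \<sigma> \<union> {\<tau> \<in> K. \<tau> \<subseteq> \<sigma>}"

definition mv_path :: "'v set set \<Rightarrow> 'v set set set \<Rightarrow> 'v set list \<Rightarrow> bool" where
  "mv_path K V xs \<longleftrightarrow> xs \<noteq> [] \<and> set xs \<subseteq> K \<and>
     (\<forall>k. Suc k < length xs \<longrightarrow> xs ! Suc k \<in> mv_F K V (xs ! k))"

definition morse_decomposition ::
  "'v set set \<Rightarrow> 'v set set set \<Rightarrow> ('p::order) set \<Rightarrow> ('p \<Rightarrow> 'v set set) \<Rightarrow> bool" where
  "morse_decomposition K V P M \<longleftrightarrow> finite P \<and>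
     (\<forall>p\<in>P. M p \<noteq> {}) \<and> (\<Union>p\<in>P. M p) = K \<and>
     (\<forall>p\<in>P. \<forall>q\<in>P. p \<noteq> q \<longrightarrow> M p \<inter> M q = {}) \<and>
     (\<forall>p\<in>P. \<forall>q\<in>P. \<forall>xs. mv_path K V xs \<and> hd xs \<in> M p \<and> last xs \<in> M q \<longrightarrow> q \<le> p)"

definition lyap_val :: "('p \<Rightarrow> 'v set set) \<Rightarrow> ('v set \<Rightarrow> real) \<Rightarrow> 'p \<Rightarrow> real" where
  "lyap_val M f p = f (SOME \<sigma>. \<sigma> \<in> M p)"

definition lyapunov :: "('p::order) set \<Rightarrow> ('p \<Rightarrow> 'v set set) \<Rightarrow> ('v set \<Rightarrow> real) \<Rightarrow> bool" where
  "lyapunov P M f \<longleftrightarrow>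
     (\<forall>p\<in>P. \<forall>\<sigma>\<in>M p. f \<sigma> = lyap_val M f p) \<and>
     (\<forall>p\<in>P. \<forall>q\<in>P. p \<le> q \<longrightarrow> lyap_val M f p \<le> lyap_val M f q)"

text \<open>An f-compatible order: an enumeration \<open>ps = [p_1, ..., p_m]\<close> of P (0-based list)
  that is a linear extension of the partial order and along which f is nondecreasing.\<close>
definition f_compatible :: "('p::order) set \<Rightarrow> ('p \<Rightarrow> 'v set set) \<Rightarrow> ('v set \<Rightarrow> real) \<Rightarrow> 'p list \<Rightarrow> bool" where
  "f_compatible P M f ps \<longleftrightarrow> distinct ps \<and> set ps = P \<and>
     (\<forall>i<length ps. \<forall>j<length ps. ps ! i \<le> ps ! j \<longrightarrow> i \<le> j) \<and>
     sorted (map (lyap_val M f) ps)"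

definition filt :: "('p \<Rightarrow> 'v set set) \<Rightarrow> 'p list \<Rightarrow> nat \<Rightarrow> 'v set set" where
  "filt M ps i = (\<Union>p\<in>set (take i ps). M p)"

text \<open>Chains with Z_2 coefficients: functions from simplices to \<open>bit\<close>. A q-chain of L is
  supported on the q-simplices (card = q+1) of L.\<close>

definition chains :: "'v set set \<Rightarrow> nat \<Rightarrow> ('v set \<Rightarrow> bit) set" where
  "chains L q = {c. \<forall>\<sigma>. c \<sigma> \<noteq> 0 \<longrightarrow> \<sigma> \<in> L \<and> card \<sigma> = Suc q}"

text \<open>Boundary operator over Z_2: the coefficient of \<tau> in \<open>\<partial>c\<close> is the sum of the
  coefficients of the cofaces of \<tau> of one dimension higher (the empty set is not a simplex,
  so vertices have zero boundary).\<close>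
definition boundary :: "('v set \<Rightarrow> bit) \<Rightarrow> ('v set \<Rightarrow> bit)" where
  "boundary c = (\<lambda>\<tau>. if \<tau> = {} then 0 else
      (\<Sum>\<sigma>\<in>{\<sigma>. c \<sigma> \<noteq> 0 \<and> \<tau> \<subseteq> \<sigma> \<and> card \<sigma> = Suc (card \<tau>)}. c \<sigma>))"

definition cycles :: "'v set set \<Rightarrow> nat \<Rightarrow> ('v set \<Rightarrow> bit) set" where
  "cycles L q = {c \<in> chains L q. boundary c = 0}"

definition bdries :: "'v set set \<Rightarrow> nat \<Rightarrow> ('v set \<Rightarrow> bit) set" where
  "bdries L q = boundary ` chains L (Suc q)"

definition z2dim :: "('v set \<Rightarrow> bit) set \<Rightarrow> nat" where
  "z2dim S = vector_space.dim (\<lambda>(a::bit) (c::'v set \<Rightarrow> bit) x. a * c x) S"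

text \<open>Rank of the inclusion-induced map \<open>H_q(L1) \<rightarrow> H_q(L2)\<close> for \<open>L1 \<subseteq> L2\<close>:
  its image is \<open>(Z_q(L1) + B_q(L2)) / B_q(L2)\<close>.\<close>
definition hom_rank :: "'v set set \<Rightarrow> 'v set set \<Rightarrow> nat \<Rightarrow> nat" where
  "hom_rank L1 L2 q = z2dim (cycles L1 q \<union> bdries L2 q) - z2dim (bdries L2 q)"

text \<open>Rank function of the persistence module \<open>H_q(K_1) \<rightarrow> ... \<rightarrow> H_q(K_m)\<close>
  (indices 1..m; zero outside this range).\<close>
definition pm_rank :: "('p \<Rightarrow> 'v set set) \<Rightarrow> 'p list \<Rightarrow> nat \<Rightarrow> nat \<Rightarrow> nat \<Rightarrow> int" where
  "pm_rank M ps q a b =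
     (if 1 \<le> a \<and> a \<le> b \<and> b \<le> length ps then int (hom_rank (filt M ps a) (filt M ps b) q) else 0)"

text \<open>Multiplicity of the interval module \<open>[a,b]\<close> in the interval decomposition
  (determined by the rank function by inclusion-exclusion).\<close>
definition interval_mult :: "('p \<Rightarrow> 'v set set) \<Rightarrow> 'p list \<Rightarrow> nat \<Rightarrow> nat \<Rightarrow> nat \<Rightarrow> nat" where
  "interval_mult M ps q a b = nat (pm_rank M ps q a b - pm_rank M ps q (a - 1) b
      - pm_rank M ps q a (Suc b) + pm_rank M ps q (a - 1) (Suc b))"

text \<open>\<open>f(p_i)\<close> for \<open>1 \<le> i \<le> m\<close>, and \<open>f(p_{m+1}) = +\<infinity>\<close>.\<close>
definition fval_at :: "('p \<Rightarrow> 'v set set) \<Rightarrow> ('v set \<Rightarrow> real) \<Rightarrow> 'p list \<Rightarrow> nat \<Rightarrow> ereal" where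
  "fval_at M f ps i = (if i \<le> length ps then ereal (lyap_val M f (ps ! (i - 1))) else \<infinity>)"

definition pers :: "('p \<Rightarrow> 'v set set) \<Rightarrow> ('v set \<Rightarrow> real) \<Rightarrow> 'p list \<Rightarrow> nat \<Rightarrow> (ereal \<times> ereal) multiset" where
  "pers M f ps q = (\<Sum>(a, b)\<in>{(a, b). 1 \<le> a \<and> a \<le> b \<and> b \<le> length ps \<and>
        fval_at M f ps a \<noteq> fval_at M f ps (Suc b)}.
      replicate_mset (interval_mult M ps q a b) (fval_at M f ps a, fval_at M f ps (Suc b)))"

end

theory Submission
  imports Defs
begin

text \<open>If \<open>i\<close> is the number of \<open>p \<in> P\<close> with \<open>f(p) < c\<close>, or with \<open>f(p) \<le> c\<close>, then \<open>K_i\<close> is the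
  union of the Morse sets on which \<open>f\<close> lies below that threshold, so it is the same for every
  \<open>f\<close>-compatible order. The multiplicity of a point \<open>(u, v)\<close> of the diagram is the sum of the
  interval multiplicities over the block of index pairs \<open>[a, b]\<close> with \<open>f(p_a) = u\<close> and
  \<open>f(p_{b+1}) = v\<close>. Each multiplicity is a mixed second difference of the rank function, so the
  sum telescopes to the ranks at the four corners of the block, and these corners are threshold
  indices as above. Summing the multiplicities before truncating them to natural numbers is
  legitimate because they are nonnegative, by submodularity of dimension.\<close>

section \<open>Dimension inequalities for finite sets of vectors\<close>

context vector_space
begin

lemma dim_subset_finite:
  assumes "finite T" "S \<subseteq> T"
  shows "dim S \<le> dim T"
proof -
  obtain B where B: "B \<subseteq> S" "independent B" "card B = dim S"
    by (rule basis_exists)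
  obtain C where C: "C \<subseteq> T" "independent C" "T \<subseteq> span C" "card C = dim T"
    by (rule basis_exists)
  have "B \<subseteq> span C"
    using B(1) assms(2) C(3) by blast
  then show ?thesis
    using independent_span_bound[OF finite_subset[OF C(1) assms(1)] B(2)] B(3) C(4) by simp
qed

lemma dim_Un_Int_le:
  assumes "finite A" "finite B"
  shows "dim (A \<union> B) + dim (A \<inter> B) \<le> dim A + dim B"
proof -
  obtain I where I: "I \<subseteq> A \<inter> B" "independent I" "card I = dim (A \<inter> B)"
    by (rule basis_exists)
  obtain J where J: "I \<subseteq> J" "J \<subseteq> A \<union> B" "independent J" "A \<union> B \<subseteq> span J"
    using maximal_independent_subset_extend[OF _ I(2), of "A \<union> B"] I(1) by blast
  have "finite J"
    using J(2) assms finite_subset by blast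
  have card_J: "card J = dim (A \<union> B)"
    using basis_card_eq_dim[OF J(2) J(4) J(3)] .
  have card_J_Int: "card (J \<inter> C) \<le> dim C" if "finite C" for C
  proof -
    have "card (J \<inter> C) = dim (J \<inter> C)"
      using independent_mono[OF J(3)] dim_eq_card_independent by (metis inf_le1)
    also have "\<dots> \<le> dim C"
      using that by (intro dim_subset_finite) auto
    finally show ?thesis .
  qed
  have "card (J \<inter> A) + card (J \<inter> B) = card ((J \<inter> A) \<union> (J \<inter> B)) + card ((J \<inter> A) \<inter> (J \<inter> B))"
    using \<open>finite J\<close> by (intro card_Un_Int) auto
  also have "(J \<inter> A) \<union> (J \<inter> B) = J"
    using J(2) by blast
  also have "(J \<inter> A) \<inter> (J \<inter> B) = J \<inter> (A \<inter> B)"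
    by blast
  finally have "card (J \<inter> A) + card (J \<inter> B) = card J + card (J \<inter> (A \<inter> B))" .
  moreover have "card (J \<inter> A) \<le> dim A" "card (J \<inter> B) \<le> dim B"
    using card_J_Int assms by auto
  moreover have "card I \<le> card (J \<inter> (A \<inter> B))"
    using I(1) J(1) \<open>finite J\<close> by (intro card_mono) auto
  ultimately show ?thesis
    using I(3) card_J by linarith
qed

lemma dim_Un_exchange_le:
  assumes "finite X" "finite Y'" "X' \<subseteq> X" "Y \<subseteq> Y'"
  shows "dim (X \<union> Y') + dim (X' \<union> Y) \<le> dim (X \<union> Y) + dim (X' \<union> Y')"
proof -
  have fin: "finite (X \<union> Y)" "finite (X' \<union> Y')"
    using assms finite_subset by blast+
  have "dim (X' \<union> Y) \<le> dim ((X \<union> Y) \<inter> (X' \<union> Y'))"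
    using fin assms(3,4) by (intro dim_subset_finite) auto
  moreover have "(X \<union> Y) \<union> (X' \<union> Y') = X \<union> Y'"
    using assms(3,4) by blast
  ultimately show ?thesis
    using dim_Un_Int_le[OF fin] by simp
qed

end

interpretation Z2_chains: vector_space "\<lambda>(a::bit) (c::'v set \<Rightarrow> bit) x. a * c x"
  by unfold_locales (auto simp: fun_eq_iff plus_fun_def algebra_simps)

lemma z2dim_eq_dim: "z2dim S = Z2_chains.dim S"
  unfolding z2dim_def ..

definition all_chains :: "'v set set \<Rightarrow> ('v set \<Rightarrow> bit) set" where
  "all_chains K = {c. \<forall>\<sigma>. c \<sigma> \<noteq> 0 \<longrightarrow> \<sigma> \<in> K}"

lemma finite_UNIV_bit: "finite (UNIV :: bit set)"
proof -
  have "(UNIV :: bit set) = {0, 1}"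
    using bit.exhaust by auto
  then show ?thesis
    by (metis finite.emptyI finite_insert)
qed

lemma finite_all_chains:
  assumes "finite K"
  shows "finite (all_chains K)"
proof -
  have "all_chains K = {c. \<forall>\<sigma>. (\<sigma> \<in> K \<longrightarrow> c \<sigma> \<in> UNIV) \<and> (\<sigma> \<notin> K \<longrightarrow> c \<sigma> = 0)}"
    by (auto simp: all_chains_def)
  then show ?thesis
    using finite_set_of_finite_funs[OF assms finite_UNIV_bit] by simp
qed

lemma finite_simp_complex_finite: "finite_simp_complex K \<Longrightarrow> finite K"
  unfolding finite_simp_complex_def by blast

lemma finite_simp_complex_face:
  "finite_simp_complex K \<Longrightarrow> \<sigma> \<in> K \<Longrightarrow> \<tau> \<subseteq> \<sigma> \<Longrightarrow> \<tau> \<noteq> {} \<Longrightarrow> \<tau> \<in> K"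
  unfolding finite_simp_complex_def by blast

lemma boundary_nonzeroE:
  assumes "boundary c \<tau> \<noteq> 0"
  obtains \<sigma> where "c \<sigma> \<noteq> 0" "\<tau> \<subseteq> \<sigma>" "\<tau> \<noteq> {}"
proof -
  have "\<tau> \<noteq> {}" "{\<sigma>. c \<sigma> \<noteq> 0 \<and> \<tau> \<subseteq> \<sigma> \<and> card \<sigma> = Suc (card \<tau>)} \<noteq> {}"
    using assms unfolding boundary_def by (metis sum.empty)+
  then show ?thesis
    using that by blast
qed

lemma cycles_subset_all_chains: "L \<subseteq> K \<Longrightarrow> cycles L q \<subseteq> all_chains K"
  by (auto simp: cycles_def chains_def all_chains_def)

lemma bdries_subset_all_chains:
  assumes "finite_simp_complex K" "L \<subseteq> K"
  shows "bdries L q \<subseteq> all_chains K"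
proof
  fix d assume "d \<in> bdries L q"
  then obtain c where c: "c \<in> chains L (Suc q)" "d = boundary c"
    unfolding bdries_def by blast
  show "d \<in> all_chains K"
    unfolding all_chains_def
  proof (intro CollectI allI impI)
    fix \<tau> assume "d \<tau> \<noteq> 0"
    then obtain \<sigma> where \<sigma>: "c \<sigma> \<noteq> 0" "\<tau> \<subseteq> \<sigma>" "\<tau> \<noteq> {}"
      using c(2) boundary_nonzeroE by blast
    then have "\<sigma> \<in> K"
      using c(1) assms(2) by (auto simp: chains_def)
    then show "\<tau> \<in> K"
      using finite_simp_complex_face[OF assms(1)] \<sigma>(2,3) by blast
  qed
qed

lemma chains_mono: "L \<subseteq> L' \<Longrightarrow> chains L q \<subseteq> chains L' q"
  by (auto simp: chains_def)

lemma cycles_mono: "L \<subseteq> L' \<Longrightarrow> cycles L q \<subseteq> cycles L' q"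
  unfolding cycles_def using chains_mono by blast

lemma bdries_mono: "L \<subseteq> L' \<Longrightarrow> bdries L q \<subseteq> bdries L' q"
  unfolding bdries_def using chains_mono by (rule image_mono)

section \<open>Nonnegativity of the interval multiplicities\<close>

lemma filt_mono: "i \<le> j \<Longrightarrow> filt M ps i \<subseteq> filt M ps j"
  unfolding filt_def by (rule UN_mono[OF set_take_subset_set_take]) simp_all

lemma filt_subset: "(\<Union>p\<in>set ps. M p) \<subseteq> K \<Longrightarrow> filt M ps i \<subseteq> K"
  unfolding filt_def by (auto dest: in_set_takeD)

text \<open>With no cycles at index 0 and every chain a boundary at index \<open>m + 1\<close>, the rank formula
  also produces the zero values of \<^const>\<open>pm_rank\<close> at these indices.\<close>

definition filt_cycles :: "('p \<Rightarrow> 'v set set) \<Rightarrow> 'p list \<Rightarrow> nat \<Rightarrow> nat \<Rightarrow> ('v set \<Rightarrow> bit) set" where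
  "filt_cycles M ps q a = (if a = 0 then {} else cycles (filt M ps a) q)"

definition filt_bdries ::
  "'v set set \<Rightarrow> ('p \<Rightarrow> 'v set set) \<Rightarrow> 'p list \<Rightarrow> nat \<Rightarrow> nat \<Rightarrow> ('v set \<Rightarrow> bit) set" where
  "filt_bdries K M ps q b = (if length ps < b then all_chains K else bdries (filt M ps b) q)"

lemma filt_cycles_subset:
  assumes "(\<Union>p\<in>set ps. M p) \<subseteq> K"
  shows "filt_cycles M ps q a \<subseteq> all_chains K"
  unfolding filt_cycles_def using cycles_subset_all_chains[OF filt_subset[OF assms]] by auto

lemma filt_bdries_subset:
  assumes "finite_simp_complex K" "(\<Union>p\<in>set ps. M p) \<subseteq> K"
  shows "filt_bdries K M ps q b \<subseteq> all_chains K"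
  unfolding filt_bdries_def using bdries_subset_all_chains[OF assms(1) filt_subset[OF assms(2)]] by auto

lemma filt_cycles_mono:
  assumes "a \<le> a'"
  shows "filt_cycles M ps q a \<subseteq> filt_cycles M ps q a'"
  unfolding filt_cycles_def using cycles_mono[OF filt_mono[OF assms]] assms by auto

lemma filt_bdries_mono:
  assumes "finite_simp_complex K" "(\<Union>p\<in>set ps. M p) \<subseteq> K" "b \<le> b'"
  shows "filt_bdries K M ps q b \<subseteq> filt_bdries K M ps q b'"
  using filt_bdries_subset[OF assms(1,2), of q b] bdries_mono[OF filt_mono[OF assms(3)], of M ps q]
    assms(3)
  by (auto simp: filt_bdries_def)

lemma pm_rank_eq_dim_diff:
  assumes K: "finite_simp_complex K" and sub: "(\<Union>p\<in>set ps. M p) \<subseteq> K"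
    and ab: "a \<le> b" "b \<le> Suc (length ps)"
  shows "pm_rank M ps q a b =
    int (Z2_chains.dim (filt_cycles M ps q a \<union> filt_bdries K M ps q b))
      - int (Z2_chains.dim (filt_bdries K M ps q b))"
proof -
  let ?X = "filt_cycles M ps q a" and ?Y = "filt_bdries K M ps q b"
  have "finite (?X \<union> ?Y)"
    using finite_all_chains[OF finite_simp_complex_finite[OF K]]
      filt_cycles_subset[OF sub] filt_bdries_subset[OF K sub]
    by (metis finite_subset le_sup_iff)
  then have dim_le: "Z2_chains.dim ?Y \<le> Z2_chains.dim (?X \<union> ?Y)"
    by (intro Z2_chains.dim_subset_finite) auto
  consider "a = 0" | "length ps < b" | "1 \<le> a" "b \<le> length ps"
    using ab by linarith
  then show ?thesis
  proof cases
    case 1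
    then show ?thesis
      by (simp add: pm_rank_def filt_cycles_def)
  next
    case 2
    then have "?X \<union> ?Y = ?Y"
      using filt_cycles_subset[OF sub] by (auto simp: filt_bdries_def)
    then show ?thesis
      using 2 by (simp add: pm_rank_def)
  next
    case 3
    then show ?thesis
      using ab dim_le
      by (simp add: pm_rank_def hom_rank_def z2dim_eq_dim filt_cycles_def filt_bdries_def of_nat_diff)
  qed
qed

definition interval_mult_int :: "('p \<Rightarrow> 'v set set) \<Rightarrow> 'p list \<Rightarrow> nat \<Rightarrow> nat \<Rightarrow> nat \<Rightarrow> int" where
  "interval_mult_int M ps q a b = pm_rank M ps q a b - pm_rank M ps q (a - 1) b
      - pm_rank M ps q a (Suc b) + pm_rank M ps q (a - 1) (Suc b)"

lemma interval_mult_eq_nat: "interval_mult M ps q a b = nat (interval_mult_int M ps q a b)"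
  by (simp add: interval_mult_def interval_mult_int_def)

lemma interval_mult_int_nonneg:
  assumes K: "finite_simp_complex K" and sub: "(\<Union>p\<in>set ps. M p) \<subseteq> K"
    and ab: "1 \<le> a" "a \<le> b" "b \<le> length ps"
  shows "0 \<le> interval_mult_int M ps q a b"
proof -
  let ?dim = "Z2_chains.dim"
  let ?X = "filt_cycles M ps q a" and ?X' = "filt_cycles M ps q (a - 1)"
  let ?Y = "filt_bdries K M ps q b" and ?Y' = "filt_bdries K M ps q (Suc b)"
  have "finite ?X" "finite ?Y'"
    using finite_all_chains[OF finite_simp_complex_finite[OF K]]
      filt_cycles_subset[OF sub] filt_bdries_subset[OF K sub] by (metis finite_subset)+
  then have "?dim (?X \<union> ?Y') + ?dim (?X' \<union> ?Y) \<le> ?dim (?X \<union> ?Y) + ?dim (?X' \<union> ?Y')"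
    by (intro Z2_chains.dim_Un_exchange_le filt_cycles_mono filt_bdries_mono[OF K sub]) auto
  then show ?thesis
    using ab by (simp add: interval_mult_int_def pm_rank_eq_dim_diff[OF K sub])
qed


lemma length_filter_mono: "(\<And>x. P x \<Longrightarrow> Q x) \<Longrightarrow> length (filter P xs) \<le> length (filter Q xs)"
  by (induction xs) auto

lemma in_set_take_iff: "x \<in> set (take n xs) \<longleftrightarrow> (\<exists>i<length xs. i < n \<and> xs ! i = x)"
  by (auto simp: in_set_conv_nth)

lemma sorted_nth_antimono_iff:
  fixes Q :: "'a::linorder \<Rightarrow> bool"
  assumes "sorted xs" "antimono Q" "i < length xs"
  shows "Q (xs ! i) \<longleftrightarrow> i < length (filter Q xs)"
  using assms(1,3)
proof (induction xs arbitrary: i)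
  case Nil
  then show ?case by simp
next
  case (Cons x xs)
  show ?case
  proof (cases "Q x")
    case True
    then show ?thesis
      using Cons by (cases i) auto
  next
    case False
    then have "\<not> Q y" if "y \<in> set (x # xs)" for y
      using Cons.prems(1) that antimonoD[OF assms(2), of x y] by auto
    then show ?thesis
      using nth_mem[OF Cons.prems(2)] by (auto simp: filter_empty_conv)
  qed
qed

lemma set_take_length_filter:
  fixes Q :: "'b::linorder \<Rightarrow> bool"
  assumes "sorted (map g ps)" "antimono Q"
  shows "set (take (length (filter Q (map g ps))) ps) = {p \<in> set ps. Q (g p)}"
proof -
  let ?n = "length (filter Q (map g ps))"
  have Q_iff: "Q (g (ps ! i)) \<longleftrightarrow> i < ?n" if "i < length ps" for i
    using sorted_nth_antimono_iff[OF assms, of i] that by simp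
  show ?thesis
  proof (intro set_eqI iffI)
    fix p assume "p \<in> set (take ?n ps)"
    then obtain i where "i < length ps" "i < ?n" "ps ! i = p"
      unfolding in_set_take_iff by blast
    then show "p \<in> {p \<in> set ps. Q (g p)}"
      using Q_iff by auto
  next
    fix p assume "p \<in> {p \<in> set ps. Q (g p)}"
    then obtain i where "i < length ps" "ps ! i = p" "Q (g p)"
      by (auto simp: in_set_conv_nth)
    then show "p \<in> set (take ?n ps)"
      unfolding in_set_take_iff using Q_iff by blast
  qed
qed

lemma antimono_less: "antimono (\<lambda>y. y < (x::'a::order))"
  by (rule antimonoI) (auto intro: le_less_trans)

lemma antimono_le: "antimono (\<lambda>y. y \<le> (x::'a::order))"
  by (rule antimonoI) (auto intro: order_trans)

definition indices_of :: "'a list \<Rightarrow> 'a \<Rightarrow> nat set" where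
  "indices_of xs x = {i. i < length xs \<and> xs ! i = x}"

lemma sorted_indices_of:
  fixes xs :: "'a::linorder list"
  assumes "sorted xs"
  shows "indices_of xs x = {length (filter (\<lambda>y. y < x) xs)..<length (filter (\<lambda>y. y \<le> x) xs)}"
proof -
  have "i < length xs \<and> xs ! i = x \<longleftrightarrow>
      length (filter (\<lambda>y. y < x) xs) \<le> i \<and> i < length (filter (\<lambda>y. y \<le> x) xs)" for i
  proof (cases "i < length xs")
    case True
    have "xs ! i < x \<longleftrightarrow> i < length (filter (\<lambda>y. y < x) xs)"
      by (rule sorted_nth_antimono_iff[OF assms antimono_less True])
    moreover have "xs ! i \<le> x \<longleftrightarrow> i < length (filter (\<lambda>y. y \<le> x) xs)"
      by (rule sorted_nth_antimono_iff[OF assms antimono_le True])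
    ultimately show ?thesis
      using True by (metis leD linorder_not_less order.order_iff_strict)
  next
    case False
    then have "\<not> i < length (filter (\<lambda>y. y \<le> x) xs)"
      using length_filter_le[of "\<lambda>y. y \<le> x" xs] by linarith
    then show ?thesis
      using False by auto
  qed
  then show ?thesis
    unfolding indices_of_def set_eq_iff atLeastLessThan_iff mem_Collect_eq by blast
qed

lemma sorted_indices_of_less:
  assumes "sorted xs" "x < y" "i \<in> indices_of xs x" "j \<in> indices_of xs y"
  shows "i < j"
proof (rule ccontr)
  assume "\<not> i < j"
  then have "xs ! j \<le> xs ! i"
    using assms(1,3) by (intro sorted_nth_mono) (auto simp: indices_of_def)
  with assms(2-4) show False
    by (simp add: indices_of_def)
qed

section \<open>Persistence diagrams of orders sorted by the Lyapunov function\<close>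

definition ext_vals :: "('p \<Rightarrow> 'v set set) \<Rightarrow> ('v set \<Rightarrow> real) \<Rightarrow> 'p list \<Rightarrow> ereal list" where
  "ext_vals M f ps = map ereal (map (lyap_val M f) ps) @ [\<infinity>]"

lemma length_ext_vals [simp]: "length (ext_vals M f ps) = Suc (length ps)"
  by (simp add: ext_vals_def)

lemma fval_at_Suc: "i \<le> length ps \<Longrightarrow> fval_at M f ps (Suc i) = ext_vals M f ps ! i"
  by (auto simp: fval_at_def ext_vals_def nth_append le_less)

lemma sorted_ext_vals: "sorted (map (lyap_val M f) ps) \<Longrightarrow> sorted (ext_vals M f ps)"
  by (simp add: ext_vals_def sorted_append sorted_map)

lemma filt_length_filter_ext_vals:
  fixes Q :: "ereal \<Rightarrow> bool"
  assumes "sorted (map (lyap_val M f) ps)" "antimono Q"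
  shows "filt M ps (length (filter Q (ext_vals M f ps)))
    = (\<Union>p\<in>{p \<in> set ps. Q (ereal (lyap_val M f p))}. M p)"
proof (cases "Q \<infinity>")
  case True
  then have "Q x" for x
    using antimonoD[OF assms(2), of x \<infinity>] by auto
  then show ?thesis
    by (simp add: filt_def ext_vals_def)
next
  case False
  have "sorted (map (ereal \<circ> lyap_val M f) ps)"
    using assms(1) by (simp add: sorted_map)
  then have "set (take (length (filter Q (map (ereal \<circ> lyap_val M f) ps))) ps)
      = {p \<in> set ps. Q ((ereal \<circ> lyap_val M f) p)}"
    using assms(2) by (rule set_take_length_filter)
  then show ?thesis
    using False by (simp add: filt_def ext_vals_def)
qed

lemma pers_point_index_pairs:
  assumes "sorted (map (lyap_val M f) ps)"
  defines "evs \<equiv> ext_vals M f ps" and "fv \<equiv> fval_at M f ps"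
  shows "{ab \<in> {(a, b). 1 \<le> a \<and> a \<le> b \<and> b \<le> length ps \<and> fv a \<noteq> fv (Suc b)}.
            (\<lambda>(a, b). (fv a, fv (Suc b))) ab = (u, v)}
    = (\<lambda>(i, j). (Suc i, j)) ` (if u < v then indices_of evs u \<times> indices_of evs v else {})"
    (is "?S = ?T")
proof -
  have sorted: "sorted evs"
    using sorted_ext_vals[OF assms(1)] by (simp add: evs_def)
  have key: "(Suc i, j) \<in> ?S \<longleftrightarrow> u < v \<and> i \<in> indices_of evs u \<and> j \<in> indices_of evs v" for i j
  proof
    assume "(Suc i, j) \<in> ?S"
    then have ij: "i < j" "j \<le> length ps" "evs ! i = u" "evs ! j = v" "u \<noteq> v"
      using fval_at_Suc[of i ps M f] fval_at_Suc[of j ps M f] by (auto simp: evs_def fv_def)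
    moreover have "evs ! i \<le> evs ! j"
      using sorted ij(1,2) by (intro sorted_nth_mono) (auto simp: evs_def)
    ultimately show "u < v \<and> i \<in> indices_of evs u \<and> j \<in> indices_of evs v"
      by (auto simp: indices_of_def evs_def)
  next
    assume uv: "u < v \<and> i \<in> indices_of evs u \<and> j \<in> indices_of evs v"
    then have "i < j"
      using sorted_indices_of_less[OF sorted] by blast
    then show "(Suc i, j) \<in> ?S"
      using uv fval_at_Suc[of i ps M f] fval_at_Suc[of j ps M f]
      by (auto simp: indices_of_def evs_def fv_def)
  qed
  show ?thesis
  proof (intro set_eqI iffI)
    fix ab assume "ab \<in> ?S"
    moreover from this obtain i j where "ab = (Suc i, j)"
      by (cases ab) (auto dest!: Suc_le_D)
    ultimately show "ab \<in> ?T"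
      using key by auto
  next
    fix ab assume "ab \<in> ?T"
    then obtain i j where "ab = (Suc i, j)" "u < v" "i \<in> indices_of evs u" "j \<in> indices_of evs v"
      by (auto split: if_splits)
    then show "ab \<in> ?S"
      using key by blast
  qed
qed

lemma count_pers:
  assumes "sorted (map (lyap_val M f) ps)"
  defines "evs \<equiv> ext_vals M f ps"
  shows "count (pers M f ps q) (u, v) = (if u < v
    then \<Sum>(i, j)\<in>indices_of evs u \<times> indices_of evs v. interval_mult M ps q (Suc i) j else 0)"
proof -
  let ?fv = "fval_at M f ps" and ?g = "\<lambda>(a, b). interval_mult M ps q a b"
  let ?S = "{(a, b). 1 \<le> a \<and> a \<le> b \<and> b \<le> length ps \<and> ?fv a \<noteq> ?fv (Suc b)}"
  let ?w = "\<lambda>(a, b). (?fv a, ?fv (Suc b))"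
  have "finite ?S"
    by (rule finite_subset[of _ "{..length ps} \<times> {..length ps}"]) auto
  have "count (pers M f ps q) (u, v) = (\<Sum>ab\<in>?S. if ?w ab = (u, v) then ?g ab else 0)"
    unfolding pers_def count_sum by (rule sum.cong) (auto split: if_splits)
  also have "\<dots> = (\<Sum>ab\<in>{ab \<in> ?S. ?w ab = (u, v)}. ?g ab)"
    by (rule sum.inter_filter[OF \<open>finite ?S\<close>, symmetric])
  also have "\<dots> = (\<Sum>ab\<in>(\<lambda>(i, j). (Suc i, j)) `
      (if u < v then indices_of evs u \<times> indices_of evs v else {}). ?g ab)"
    unfolding pers_point_index_pairs[OF assms(1)] evs_def ..
  also have "\<dots> = (if u < v
      then \<Sum>(i, j)\<in>indices_of evs u \<times> indices_of evs v. interval_mult M ps q (Suc i) j else 0)"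
    by (subst sum.reindex) (auto simp: inj_on_def intro!: sum.cong)
  finally show ?thesis .
qed

lemma sum_second_difference:
  fixes R :: "nat \<Rightarrow> nat \<Rightarrow> 'a::ab_group_add"
  assumes "lo \<le> hi" "lo' \<le> hi'"
  shows "(\<Sum>i\<in>{lo..<hi}. \<Sum>j\<in>{lo'..<hi'}. R (Suc i) j - R i j - R (Suc i) (Suc j) + R i (Suc j))
    = R hi lo' - R lo lo' - R hi hi' + R lo hi'"
proof -
  have inner: "(\<Sum>j\<in>{lo'..<hi'}. R (Suc i) j - R i j - R (Suc i) (Suc j) + R i (Suc j))
      = (R (Suc i) lo' - R (Suc i) hi') - (R i lo' - R i hi')" for i
    using sum_Suc_diff'[OF assms(2), of "\<lambda>j. R i j - R (Suc i) j"] by (simp add: algebra_simps)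
  have "(\<Sum>i\<in>{lo..<hi}. (R (Suc i) lo' - R (Suc i) hi') - (R i lo' - R i hi'))
      = (R hi lo' - R hi hi') - (R lo lo' - R lo hi')"
    using sum_Suc_diff'[OF assms(1), of "\<lambda>i. R i lo' - R i hi'"] .
  then show ?thesis
    by (simp only: inner) (simp add: algebra_simps)
qed

lemma count_pers_eq_corner_ranks:
  fixes q :: nat
  assumes K: "finite_simp_complex K" and sub: "(\<Union>p\<in>set ps. M p) \<subseteq> K"
    and sorted: "sorted (map (lyap_val M f) ps)" and "u < v"
  defines "evs \<equiv> ext_vals M f ps" and "R \<equiv> pm_rank M ps q"
  defines "lo \<equiv> length (filter (\<lambda>x. x < u) evs)" and "hi \<equiv> length (filter (\<lambda>x. x \<le> u) evs)"
    and "lo' \<equiv> length (filter (\<lambda>x. x < v) evs)" and "hi' \<equiv> length (filter (\<lambda>x. x \<le> v) evs)"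
  shows "count (pers M f ps q) (u, v) = nat (R hi lo' - R lo lo' - R hi hi' + R lo hi')"
proof -
  let ?I = "indices_of evs u \<times> indices_of evs v"
  have "sorted evs"
    using sorted_ext_vals[OF sorted] by (simp add: evs_def)
  then have I: "indices_of evs u = {lo..<hi}" "indices_of evs v = {lo'..<hi'}"
    unfolding lo_def hi_def lo'_def hi'_def by (rule sorted_indices_of)+
  have nonneg: "0 \<le> interval_mult_int M ps q (Suc i) j" if "(i, j) \<in> ?I" for i j
  proof (rule interval_mult_int_nonneg[OF K sub])
    show "Suc i \<le> j"
      using sorted_indices_of_less[OF \<open>sorted evs\<close> \<open>u < v\<close>] that by (simp add: Suc_le_eq)
    show "j \<le> length ps"
      using that by (auto simp: indices_of_def evs_def)
  qed simp
  have "count (pers M f ps q) (u, v) = (\<Sum>(i, j)\<in>?I. nat (interval_mult_int M ps q (Suc i) j))"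
    using count_pers[OF sorted] \<open>u < v\<close> by (simp add: evs_def interval_mult_eq_nat split_def)
  also have "\<dots> = nat (\<Sum>(i, j)\<in>?I. interval_mult_int M ps q (Suc i) j)"
    using nonneg by (subst nat_eq_iff2) (auto simp: split_def intro!: sum_nonneg sum.cong)
  also have "(\<Sum>(i, j)\<in>?I. interval_mult_int M ps q (Suc i) j)
      = (\<Sum>i\<in>{lo..<hi}. \<Sum>j\<in>{lo'..<hi'}. R (Suc i) j - R i j - R (Suc i) (Suc j) + R i (Suc j))"
    unfolding I sum.cartesian_product[symmetric] by (simp add: interval_mult_int_def R_def)
  also have "\<dots> = R hi lo' - R lo lo' - R hi hi' + R lo hi'"
    by (rule sum_second_difference) (simp_all add: lo_def hi_def lo'_def hi'_def length_filter_mono)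
  finally show ?thesis .
qed

lemma pm_rank_eq_at_thresholds:
  fixes Q Q' :: "ereal \<Rightarrow> bool"
  assumes sorted: "sorted (map (lyap_val M f) ps)"
    and same: "set ps' = set ps" "map (lyap_val M f) ps' = map (lyap_val M f) ps"
    and "antimono Q" "antimono Q'"
  defines "evs \<equiv> ext_vals M f ps"
  shows "pm_rank M ps' q (length (filter Q evs)) (length (filter Q' evs))
    = pm_rank M ps q (length (filter Q evs)) (length (filter Q' evs))"
proof -
  have "sorted (map (lyap_val M f) ps')" "ext_vals M f ps' = evs" "length ps' = length ps"
    using sorted same(2) unfolding evs_def ext_vals_def by simp_all (metis length_map)
  then have "filt M ps' (length (filter Q evs)) = filt M ps (length (filter Q evs))"
    if "antimono Q" for Q :: "ereal \<Rightarrow> bool"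
    using filt_length_filter_ext_vals[OF sorted that] filt_length_filter_ext_vals[of M f ps' Q] that
      same unfolding evs_def by simp
  then show ?thesis
    using assms(4,5) \<open>length ps' = length ps\<close> by (simp add: pm_rank_def)
qed

lemma pers_eq_if_same_sorted_values:
  assumes K: "finite_simp_complex K" and sub: "(\<Union>p\<in>set ps. M p) \<subseteq> K"
    and sorted: "sorted (map (lyap_val M f) ps)"
    and same: "set ps' = set ps" "map (lyap_val M f) ps' = map (lyap_val M f) ps"
  shows "pers M f ps' q = pers M f ps q"
proof (rule multiset_eqI)
  fix uv :: "ereal \<times> ereal"
  obtain u v where uv: "uv = (u, v)"
    by fastforce
  have sorted': "sorted (map (lyap_val M f) ps')" and sub': "(\<Union>p\<in>set ps'. M p) \<subseteq> K"
    and evs: "ext_vals M f ps' = ext_vals M f ps"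
    using sorted sub same by (simp_all add: ext_vals_def)
  note rank_eq = pm_rank_eq_at_thresholds[OF sorted same]
  show "count (pers M f ps' q) uv = count (pers M f ps q) uv"
  proof (cases "u < v")
    case True
    then show ?thesis
      using count_pers_eq_corner_ranks[OF K sub sorted True, of q]
        count_pers_eq_corner_ranks[OF K sub' sorted' True, of q]
      by (simp only: uv evs rank_eq[OF antimono_le antimono_less] rank_eq[OF antimono_less antimono_less]
          rank_eq[OF antimono_le antimono_le] rank_eq[OF antimono_less antimono_le])
  next
    case False
    then show ?thesis
      using count_pers[OF sorted] count_pers[OF sorted'] by (simp add: uv)
  qed
qed

lemma f_compatible_map_lyap_val_eq:
  assumes "f_compatible P M f ps" "f_compatible P M f ps'"
  shows "map (lyap_val M f) ps' = map (lyap_val M f) ps"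
proof -
  have "distinct ps" "distinct ps'" "set ps' = set ps"
    and sorted: "sorted (map (lyap_val M f) ps')" "sorted (map (lyap_val M f) ps)"
    using assms unfolding f_compatible_def by simp_all
  then have "mset (map (lyap_val M f) ps') = mset (map (lyap_val M f) ps)"
    by (simp add: set_eq_iff_mset_eq_distinct)
  then have "sort (map (lyap_val M f) ps) = map (lyap_val M f) ps'"
    using sorted(1) by (rule properties_for_sort)
  with sorted(2) show ?thesis
    by (simp add: sorted_sort_id)
qed

theorem proposition13:
  fixes K :: "'v set set" and V :: "'v set set set" and P :: "'p::order set"
    and M :: "'p \<Rightarrow> 'v set set" and f :: "'v set \<Rightarrow> real" and ps ps' :: "'p list"
  assumes "finite_simp_complex K"
    and "multivector_field K V"
    and "morse_decomposition K V P M"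
    and "lyapunov P M f"
    and "f_compatible P M f ps"
    and "f_compatible P M f ps'"
  shows "\<forall>q. pers M f ps q = pers M f ps' q"
proof
  fix q
  have sorted: "sorted (map (lyap_val M f) ps)" and set: "set ps = P" "set ps' = P"
    using assms(5,6) unfolding f_compatible_def by simp_all
  have "(\<Union>p\<in>P. M p) = K"
    using assms(3) by (simp add: morse_decomposition_def)
  then have sub: "(\<Union>p\<in>set ps. M p) \<subseteq> K"
    using set by simp
  have "pers M f ps' q = pers M f ps q"
    using set by (intro pers_eq_if_same_sorted_values[OF assms(1) sub sorted]
        f_compatible_map_lyap_val_eq[OF assms(5,6)]) simp
  then show "pers M f ps q = pers M f ps' q" ..
qed

end
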